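(* Let $G$ be a graph and $k\ge 1$ an integer. Then $\mathrm{diam}(G)\le 2k+1$ if and only if every $k$-packing of $G$ is a general position set of $G$.
   Context: All graphs are finite, simple and connected; $\mathrm{diam}(G)$ is the maximum distance between two vertices of $G$. A set $S$ of vertices is a $k$-packing if $d(u,v)>k$ for all distinct $u,v\in S$. A set $S$ of vertices is a general position set if no three vertices of $S$ lie on a common geodesic (shortest path) of $G$. *)

theory Defs
  imports Main
begin

definition simple_graph :: "'a set \<Rightarrow> ('a \<Rightarrow> 'a \<Rightarrow> bool) \<Rightarrow> bool" where
  "simple_graph V E \<longleftrightarrow> finite V \<and> V \<noteq> {} \<and>
     (\<forall>u v. E u v \<longrightarrow> u \<in> V \<and> v \<in> V) \<and>
     (\<forall>u v. E u v \<longrightarrow> E v u) \<and> (\<forall>u. \<not> E u u)"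

text \<open>A walk is a nonempty vertex list of V with consecutive vertices adjacent;
  its length (number of edges) is length xs - 1.\<close>
definition walk :: "'a set \<Rightarrow> ('a \<Rightarrow> 'a \<Rightarrow> bool) \<Rightarrow> 'a list \<Rightarrow> bool" where
  "walk V E xs \<longleftrightarrow> xs \<noteq> [] \<and> set xs \<subseteq> V \<and>
     (\<forall>i. Suc i < length xs \<longrightarrow> E (xs ! i) (xs ! Suc i))"

definition walk_between :: "'a set \<Rightarrow> ('a \<Rightarrow> 'a \<Rightarrow> bool) \<Rightarrow> 'a \<Rightarrow> 'a \<Rightarrow> 'a list \<Rightarrow> bool" where
  "walk_between V E u v xs \<longleftrightarrow> walk V E xs \<and> hd xs = u \<and> last xs = v"

definition connected_graph :: "'a set \<Rightarrow> ('a \<Rightarrow> 'a \<Rightarrow> bool) \<Rightarrow> bool" where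
  "connected_graph V E \<longleftrightarrow> (\<forall>u\<in>V. \<forall>v\<in>V. \<exists>xs. walk_between V E u v xs)"

definition dist :: "'a set \<Rightarrow> ('a \<Rightarrow> 'a \<Rightarrow> bool) \<Rightarrow> 'a \<Rightarrow> 'a \<Rightarrow> nat" where
  "dist V E u v = (LEAST n. \<exists>xs. walk_between V E u v xs \<and> length xs = Suc n)"

definition diam :: "'a set \<Rightarrow> ('a \<Rightarrow> 'a \<Rightarrow> bool) \<Rightarrow> nat" where
  "diam V E = Max {dist V E u v | u v. u \<in> V \<and> v \<in> V}"

definition geodesic :: "'a set \<Rightarrow> ('a \<Rightarrow> 'a \<Rightarrow> bool) \<Rightarrow> 'a \<Rightarrow> 'a \<Rightarrow> 'a list \<Rightarrow> bool" where
  "geodesic V E u v xs \<longleftrightarrow> walk_between V E u v xs \<and> length xs = Suc (dist V E u v)"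

definition k_packing :: "'a set \<Rightarrow> ('a \<Rightarrow> 'a \<Rightarrow> bool) \<Rightarrow> nat \<Rightarrow> 'a set \<Rightarrow> bool" where
  "k_packing V E k S \<longleftrightarrow> S \<subseteq> V \<and> (\<forall>u\<in>S. \<forall>v\<in>S. u \<noteq> v \<longrightarrow> dist V E u v > k)"

definition gp_set :: "'a set \<Rightarrow> ('a \<Rightarrow> 'a \<Rightarrow> bool) \<Rightarrow> 'a set \<Rightarrow> bool" where
  "gp_set V E S \<longleftrightarrow> S \<subseteq> V \<and> (\<forall>x\<in>S. \<forall>y\<in>S. \<forall>z\<in>S. x \<noteq> y \<and> y \<noteq> z \<and> x \<noteq> z \<longrightarrow>
     \<not> (\<exists>u v xs. geodesic V E u v xs \<and> x \<in> set xs \<and> y \<in> set xs \<and> z \<in> set xs))"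

end

theory Submission imports Defs begin

(* A geodesic realises every distance between its vertices exactly, so three pairwise
   (k+1)-separated vertices on one geodesic span distance at least 2k+2; hence if the
   diameter is at most 2k+1, no three vertices of a k-packing share a geodesic.
   Conversely, a diametral geodesic of length at least 2k+2 carries the k-packing formed
   by its vertices at positions 0, k+1 and 2k+2, which is not in general position. *)

lemma walk_iff_successively:
  "walk V E xs \<longleftrightarrow> xs \<noteq> [] \<and> set xs \<subseteq> V \<and> successively E xs"
  unfolding walk_def successively_conv_nth by blast

lemma successively_take: "successively P xs \<Longrightarrow> successively P (take n xs)"
  by (metis append_take_drop_id successively_append_iff)

lemma successively_drop: "successively P xs \<Longrightarrow> successively P (drop n xs)"
  by (metis append_take_drop_id successively_append_iff)

lemma walk_between_segment:
  assumes "walk V E xs" "i \<le> j" "j < length xs"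
  shows "walk_between V E (xs ! i) (xs ! j) (drop i (take (Suc j) xs))"
proof -
  let ?ys = "drop i (take (Suc j) xs)"
  have "length ?ys = Suc j - i" using assms(3) by simp
  moreover have "set ?ys \<subseteq> set xs" by (meson in_set_dropD in_set_takeD subsetI)
  moreover have "successively E ?ys"
    using assms(1) by (simp add: walk_iff_successively successively_take successively_drop)
  ultimately show ?thesis
    using assms by (auto simp: walk_between_def walk_iff_successively hd_drop_conv_nth last_conv_nth)
qed

lemma walk_between_append:
  assumes "walk_between V E a b p" "walk_between V E b c q"
  shows "walk_between V E a c (p @ tl q)"
proof -
  obtain q' where q: "q = b # q'"
    using assms(2) unfolding walk_between_def walk_def by (metis list.collapse)
  have "successively E (p @ q')"
    using assms q
    by (auto simp: walk_between_def walk_iff_successively successively_append_iff successively_Cons)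
  then show ?thesis
    using assms q by (auto simp: walk_between_def walk_iff_successively)
qed

lemma walk_between_rev:
  assumes "\<forall>u v. E u v \<longrightarrow> E v u" "walk_between V E u v xs"
  shows "walk_between V E v u (rev xs)"
proof -
  have "successively (\<lambda>x y. E y x) xs"
    using assms by (auto simp: walk_between_def walk_iff_successively elim: successively_mono)
  then show ?thesis
    using assms(2) by (simp add: walk_between_def walk_iff_successively hd_rev last_rev)
qed

lemma dist_le_walk_length:
  assumes "walk_between V E u v xs"
  shows "dist V E u v \<le> length xs - 1"
proof -
  have "xs \<noteq> []" using assms unfolding walk_between_def walk_def by simp
  then have "\<exists>ys. walk_between V E u v ys \<and> length ys = Suc (length xs - 1)"
    using assms by auto
  then show ?thesis unfolding dist_def by (rule Least_le)
qed

lemma dist_self: "u \<in> V \<Longrightarrow> dist V E u u = 0"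
  using dist_le_walk_length[of V E u u "[u]"] by (simp add: walk_between_def walk_def)

lemma geodesic_exists:
  assumes "connected_graph V E" "u \<in> V" "v \<in> V"
  obtains xs where "geodesic V E u v xs"
proof -
  obtain xs where xs: "walk_between V E u v xs"
    using assms unfolding connected_graph_def by blast
  then have "\<exists>n ys. walk_between V E u v ys \<and> length ys = Suc n"
    unfolding walk_between_def walk_def by (metis length_Suc_conv neq_Nil_conv)
  then have "\<exists>ys. walk_between V E u v ys \<and> length ys = Suc (dist V E u v)"
    unfolding dist_def by (rule LeastI_ex)
  then show ?thesis using that unfolding geodesic_def by blast
qed

lemma dist_triangle:
  assumes "connected_graph V E" "a \<in> V" "b \<in> V" "c \<in> V"
  shows "dist V E a c \<le> dist V E a b + dist V E b c"
proof -
  obtain p where p: "geodesic V E a b p" using geodesic_exists assms(1-3) .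
  obtain q where q: "geodesic V E b c q" using geodesic_exists assms(1,3,4) .
  have "walk_between V E a c (p @ tl q)"
    using walk_between_append[of V E a b p c q] p q unfolding geodesic_def by simp
  from dist_le_walk_length[OF this] show ?thesis
    using p q unfolding geodesic_def by simp
qed

lemma dist_commute:
  assumes "\<forall>u v. E u v \<longrightarrow> E v u" "connected_graph V E" "u \<in> V" "v \<in> V"
  shows "dist V E u v = dist V E v u"
proof -
  have le: "dist V E y x \<le> dist V E x y" if xy: "x \<in> V" "y \<in> V" for x y
  proof -
    obtain p where "geodesic V E x y p" using geodesic_exists assms(2) xy .
    then have "walk_between V E y x (rev p)" "length p = Suc (dist V E x y)"
      using walk_between_rev[OF assms(1)] unfolding geodesic_def by auto
    then show ?thesis using dist_le_walk_length by fastforce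
  qed
  show ?thesis using le assms(3,4) by (simp add: order_antisym)
qed

lemma geodesic_nth_dist:
  assumes "connected_graph V E" "geodesic V E u v xs" "i \<le> j" "j < length xs"
  shows "dist V E (xs ! i) (xs ! j) = j - i"
proof -
  have w: "walk V E xs" "hd xs = u" "last xs = v" and len: "length xs = Suc (dist V E u v)"
    using assms(2) unfolding geodesic_def walk_between_def by auto
  have "xs \<noteq> []" using len by auto
  then have ends: "xs ! 0 = u" "xs ! dist V E u v = v"
    using w(2,3) hd_conv_nth[of xs] last_conv_nth[of xs] len by simp_all
  have seg: "dist V E (xs ! a) (xs ! b) \<le> b - a" if "a \<le> b" "b < length xs" for a b
    using dist_le_walk_length[OF walk_between_segment[OF w(1) that]] that by simp
  have inV: "xs ! a \<in> V" if "a < length xs" for a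
    using w(1) that unfolding walk_def by auto
  have "xs ! i \<in> V" "xs ! j \<in> V" "u \<in> V" "v \<in> V"
    using inV[of i] inV[of j] inV[of 0] inV[of "dist V E u v"] ends assms(3,4) len by auto
  then have "dist V E u v \<le> dist V E u (xs ! i) + dist V E (xs ! i) (xs ! j) + dist V E (xs ! j) v"
    using dist_triangle[OF assms(1), of u "xs ! i" v] dist_triangle[OF assms(1), of "xs ! i" "xs ! j" v]
    by linarith
  moreover have "dist V E u (xs ! i) \<le> i" "dist V E (xs ! j) v \<le> dist V E u v - j"
    using seg[of 0 i] seg[of j "dist V E u v"] ends assms(3,4) len by auto
  \<comment> \<open>the three pieces together have the length of the whole geodesic, so none can be shortcut\<close>
  ultimately show ?thesis
    using seg[of i j] assms(3,4) len by linarith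
qed

lemma finite_dists:
  "finite V \<Longrightarrow> finite {dist V E u v | u v. u \<in> V \<and> v \<in> V}"
  using finite_image_set2[of "\<lambda>u. u \<in> V" "\<lambda>v. v \<in> V" "dist V E"] by simp

lemma dist_le_diam:
  assumes "finite V" "u \<in> V" "v \<in> V"
  shows "dist V E u v \<le> diam V E"
  unfolding diam_def using assms finite_dists by (intro Max_ge) auto

lemma diam_attained:
  assumes "finite V" "V \<noteq> {}"
  obtains u v where "u \<in> V" "v \<in> V" "dist V E u v = diam V E"
proof -
  have "finite {dist V E u v | u v. u \<in> V \<and> v \<in> V}"
    using finite_dists assms(1) .
  moreover have "{dist V E u v | u v. u \<in> V \<and> v \<in> V} \<noteq> {}" using assms(2) by auto
  ultimately have "diam V E \<in> {dist V E u v | u v. u \<in> V \<and> v \<in> V}"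
    unfolding diam_def by (rule Max_in)
  then show ?thesis using that by auto
qed

lemma three_distinct_in_set_sorted_indices:
  assumes "x \<in> set xs" "y \<in> set xs" "z \<in> set xs" "x \<noteq> y" "y \<noteq> z" "x \<noteq> z"
  shows "\<exists>a b c. a < b \<and> b < c \<and> c < length xs \<and> {xs ! a, xs ! b, xs ! c} = {x, y, z}"
proof -
  obtain i j l where ijl: "i < length xs" "j < length xs" "l < length xs"
    "xs ! i = x" "xs ! j = y" "xs ! l = z"
    using assms(1-3) by (metis in_set_conv_nth)
  then have "i \<noteq> j" "j \<noteq> l" "i \<noteq> l" using assms(4-6) by auto
  then consider "i < j" "j < l" | "i < l" "l < j" | "j < i" "i < l" | "j < l" "l < i"
    | "l < i" "i < j" | "l < j" "j < i" by linarith
  then show ?thesis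
  proof cases
    case 1 then show ?thesis using ijl by (intro exI[of _ i] exI[of _ j] exI[of _ l]) auto
  next
    case 2 then show ?thesis using ijl by (intro exI[of _ i] exI[of _ l] exI[of _ j]) auto
  next
    case 3 then show ?thesis using ijl by (intro exI[of _ j] exI[of _ i] exI[of _ l]) auto
  next
    case 4 then show ?thesis using ijl by (intro exI[of _ j] exI[of _ l] exI[of _ i]) auto
  next
    case 5 then show ?thesis using ijl by (intro exI[of _ l] exI[of _ i] exI[of _ j]) auto
  next
    case 6 then show ?thesis using ijl by (intro exI[of _ l] exI[of _ j] exI[of _ i]) auto
  qed
qed

lemma gp_set_if_k_packing:
  assumes "finite V" "connected_graph V E" "diam V E \<le> 2 * k + 1" "k_packing V E k S"
  shows "gp_set V E S"
  unfolding gp_set_def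
proof (intro conjI ballI impI notI)
  show "S \<subseteq> V" using assms(4) unfolding k_packing_def by blast
  fix x y z
  assume "x \<in> S" "y \<in> S" "z \<in> S" "x \<noteq> y \<and> y \<noteq> z \<and> x \<noteq> z"
    and "\<exists>u v xs. geodesic V E u v xs \<and> x \<in> set xs \<and> y \<in> set xs \<and> z \<in> set xs"
  then obtain u v xs where g: "geodesic V E u v xs" and "x \<in> set xs" "y \<in> set xs" "z \<in> set xs"
    by blast
  with \<open>x \<noteq> y \<and> y \<noteq> z \<and> x \<noteq> z\<close> obtain a b c
    where abc: "a < b" "b < c" "c < length xs" "{xs ! a, xs ! b, xs ! c} = {x, y, z}"
    using three_distinct_in_set_sorted_indices by meson
  have "{xs ! a, xs ! b, xs ! c} \<subseteq> S"
    unfolding abc(4) using \<open>x \<in> S\<close> \<open>y \<in> S\<close> \<open>z \<in> S\<close> by simp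
  then have in_S: "xs ! a \<in> S" "xs ! b \<in> S" "xs ! c \<in> S" by simp_all
  have dists: "dist V E (xs ! a) (xs ! b) = b - a" "dist V E (xs ! b) (xs ! c) = c - b"
    "dist V E (xs ! a) (xs ! c) = c - a"
    using geodesic_nth_dist[OF assms(2) g] abc(1-3) by simp_all
  have in_V: "xs ! a \<in> V" "xs ! b \<in> V" "xs ! c \<in> V"
    using in_S assms(4) unfolding k_packing_def by auto
  have "xs ! a \<noteq> xs ! b" "xs ! b \<noteq> xs ! c"
    using dists(1,2) abc(1,2) dist_self[OF in_V(2)] dist_self[OF in_V(3)] by auto
  then have "k < b - a" "k < c - b"
    using in_S assms(4) unfolding k_packing_def dists[symmetric] by blast+
  moreover have "c - a \<le> diam V E"
    using dists(3) dist_le_diam[OF assms(1) in_V(1,3), of E] by simp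
  ultimately show False using assms(3) abc(1,2) by linarith
qed

lemma gp_setD:
  assumes "gp_set V E S" "x \<in> S" "y \<in> S" "z \<in> S" "x \<noteq> y" "y \<noteq> z" "x \<noteq> z"
    and "geodesic V E u v xs" "x \<in> set xs" "y \<in> set xs" "z \<in> set xs"
  shows False
  using assms unfolding gp_set_def by blast

lemma not_gp_k_packing_if_diam_gt:
  assumes "simple_graph V E" "connected_graph V E" "2 * k + 1 < diam V E"
  obtains S where "k_packing V E k S" "\<not> gp_set V E S"
proof -
  have fin: "finite V" "V \<noteq> {}" and sym: "\<forall>u v. E u v \<longrightarrow> E v u"
    using assms(1) unfolding simple_graph_def by auto
  obtain u v where "u \<in> V" "v \<in> V" and uv: "dist V E u v = diam V E"
    using diam_attained[OF fin] .
  then obtain xs where g: "geodesic V E u v xs" using geodesic_exists assms(2) by metis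
  define a b c where "a = xs ! 0" "b = xs ! (k + 1)" "c = xs ! (2 * k + 2)"
  have long: "2 * k + 2 < length xs" using g uv assms(3) unfolding geodesic_def by simp
  then have "0 < length xs" "k + 1 < length xs" by linarith+
  then have on_xs: "a \<in> set xs" "b \<in> set xs" "c \<in> set xs"
    unfolding a_b_c_def using long nth_mem by blast+
  then have in_V: "a \<in> V" "b \<in> V" "c \<in> V"
    using g unfolding geodesic_def walk_between_def walk_def by auto
  have d: "dist V E a b = k + 1" "dist V E b c = k + 1" "dist V E a c = 2 * k + 2"
    unfolding a_b_c_def using geodesic_nth_dist[OF assms(2) g] long by simp_all
  moreover have "dist V E b a = dist V E a b" "dist V E c b = dist V E b c"
    "dist V E c a = dist V E a c"
    using dist_commute[OF sym assms(2)] in_V by metis+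
  ultimately have packing: "k_packing V E k {a, b, c}"
    using in_V unfolding k_packing_def by auto
  have "a \<noteq> b" "b \<noteq> c" "a \<noteq> c"
    using d dist_self[OF in_V(2)] dist_self[OF in_V(3)] by auto
  then have "\<not> gp_set V E {a, b, c}"
    using gp_setD[OF _ _ _ _ _ _ _ g on_xs] by blast
  with packing show ?thesis using that by blast
qed

theorem proposition4p1:
  fixes V :: "'a set" and E :: "'a \<Rightarrow> 'a \<Rightarrow> bool" and k :: nat
  assumes "simple_graph V E" and "connected_graph V E" and "k \<ge> 1"
  shows "diam V E \<le> 2 * k + 1 \<longleftrightarrow> (\<forall>S. k_packing V E k S \<longrightarrow> gp_set V E S)"
proof
  assume "diam V E \<le> 2 * k + 1"
  moreover have "finite V" using assms(1) unfolding simple_graph_def by blast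
  ultimately show "\<forall>S. k_packing V E k S \<longrightarrow> gp_set V E S"
    using gp_set_if_k_packing[OF _ assms(2)] by blast
next
  assume all_gp: "\<forall>S. k_packing V E k S \<longrightarrow> gp_set V E S"
  show "diam V E \<le> 2 * k + 1"
  proof (rule ccontr)
    assume "\<not> diam V E \<le> 2 * k + 1"
    then obtain S where "k_packing V E k S" "\<not> gp_set V E S"
      using not_gp_k_packing_if_diam_gt[OF assms(1,2)] by (auto simp: not_le)
    with all_gp show False by blast
  qed
qed

end
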